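(* Let $m\ge 1$, let $\mathcal{I}\subseteq\mathcal{M}_m$ be a decreasing monomial set with $r=\max_{f\in\mathcal{I}}\deg f$, let $f,g\in\mathcal{I}_r$ and $h=\gcd(f,g)\in\mathcal{M}_m$. Then \[ {\rm LTA}(m,2)\cdot h\cdot \Big({\rm LTA}(m,2)\cdot \tfrac{f}{h}+{\rm LTA}(m,2)\cdot \tfrac{g}{h}\Big)= {\rm LTA}(m,2)_h\cdot h\cdot \Big({\rm LTA}(m,2)_{f}\cdot \tfrac{f}{h}+{\rm LTA}(m,2)_g\cdot \tfrac{g}{h}\Big). \]
   Context: $\mathbf{R}_m=\mathbb{F}_2[x_0,\dots,x_{m-1}]/(x_0^2-x_0,\dots,x_{m-1}^2-x_{m-1})$. $\mathcal{M}_m$ is the set of monomials $x_0^{i_0}\cdots x_{m-1}^{i_{m-1}}$, $i_j\in\{0,1\}$. For a monomial $f$, $\operatorname{ind}(f)$ is the set of indices of variables dividing $f$, $\deg f=|\operatorname{ind}(f)|$; $\gcd(f,g)$ has $\operatorname{ind}=\operatorname{ind}(f)\cap\operatorname{ind}(g)$; for $h\mid f$, $f/h$ has $\operatorname{ind}=\operatorname{ind}(f)\setminus\operatorname{ind}(h)$. Order: $f\preceq_w g$ iff $\operatorname{ind}(f)\subseteq\operatorname{ind}(g)$; for equal-degree $f=x_{i_1}\cdots x_{i_s}$, $g=x_{j_1}\cdots x_{j_s}$ (increasing indices), $f\preceq_{sh}g$ iff $i_\ell\le j_\ell$ for all $\ell$; $f\preceq g$ iff $f\preceq_{sh}g^*\preceq_w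 g$ for some $g^*$. $\mathcal{I}$ is decreasing if $f\in\mathcal{I}$, $g\preceq f$ imply $g\in\mathcal{I}$; $\mathcal{I}_r=\{f\in\mathcal{I}:\deg f=r\}$. ${\rm LTA}(m,2)$ is the set of pairs $(\mathbf{B},\varepsilon)$ with $\mathbf{B}=(b_{i,j})\in\mathbb{F}_2^{m\times m}$ lower triangular with ones on the diagonal and $\varepsilon\in\mathbb{F}_2^m$; for a monomial $u$, $(\mathbf{B},\varepsilon)\cdot u\in\mathbf{R}_m$ replaces each variable $x_i$ of $u$ by $x_i+\sum_{j<i}b_{i,j}x_j+\varepsilon_i$. For a monomial $g$, ${\rm LTA}(m,2)_g$ is the set of $(\mathbf{B},\varepsilon)\in{\rm LTA}(m,2)$ with $\varepsilon_i=0$ for $i\notin\operatorname{ind}(g)$ and $b_{i,j}=0$ (for $j<i$) whenever $i\notin\operatorname{ind}(g)$ or $j\in\operatorname{ind}(g)$. For $G\subseteq{\rm LTA}(m,2)$ and monomial $u$, $G\cdot u=\{(\mathbf{B},\varepsilon)\cdot u:(\mathbf{B},\varepsilon)\in G\}$. For sets $\mathcal{S},\mathcal{T}\subseteq\mathbf{R}_m$: $\mathcal{S}+\mathcal{T}=\{s+t\}$, $\mathcal{S}\cdot\mathcal{T}=\{st\}$; $G\cdot h\cdot(\mathcal{S})$ is the product of the set $G\cdot h$ with the set $\mathcal{S}$. *)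

theory Defs
  imports Main
begin

text \<open>Elements of R_m = F_2[x_0..x_{m-1}]/(x_i^2 - x_i) are represented by their unique
multilinear normal form: a finite set of monomials (coefficients in F_2), where a
monomial is represented by its index set ind(f), a subset of {..<m}.\<close>

type_synonym mono = "nat set"
type_synonym rpoly = "nat set set"

definition monomials :: "nat \<Rightarrow> mono set" where
  "monomials m = Pow {..<m}"

text \<open>Ring operations in R_m (x_i^2 = x_i makes the product of monomials the union).\<close>
definition padd :: "rpoly \<Rightarrow> rpoly \<Rightarrow> rpoly" where
  "padd p q = (p - q) \<union> (q - p)"

definition pmul :: "rpoly \<Rightarrow> rpoly \<Rightarrow> rpoly" where
  "pmul p q = {w. odd (card {(a, b). a \<in> p \<and> b \<in> q \<and> a \<union> b = w})}"

definition pone :: rpoly where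
  "pone = {{}}"

definition weak_le :: "mono \<Rightarrow> mono \<Rightarrow> bool" where
  "weak_le f g \<longleftrightarrow> f \<subseteq> g"

definition sh_le :: "mono \<Rightarrow> mono \<Rightarrow> bool" where
  "sh_le f g \<longleftrightarrow> card f = card g \<and>
     list_all2 (\<le>) (sorted_list_of_set f) (sorted_list_of_set g)"

definition mono_le :: "mono \<Rightarrow> mono \<Rightarrow> bool" where
  "mono_le f g \<longleftrightarrow> (\<exists>g'. sh_le f g' \<and> weak_le g' g)"

definition decreasing :: "nat \<Rightarrow> mono set \<Rightarrow> bool" where
  "decreasing m I \<longleftrightarrow> I \<subseteq> monomials m \<and>
     (\<forall>f\<in>I. \<forall>g\<in>monomials m. mono_le g f \<longrightarrow> g \<in> I)"

text \<open>LTA(m,2): pairs (B, eps), B an m x m lower triangular binary matrix with ones on the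
diagonal (entries B i j for i,j < m; all other entries are False), eps in F_2^m.\<close>
type_synonym lta = "(nat \<Rightarrow> nat \<Rightarrow> bool) \<times> (nat \<Rightarrow> bool)"

definition LTA :: "nat \<Rightarrow> lta set" where
  "LTA m = {(B, e). (\<forall>i j. B i j \<longrightarrow> i < m \<and> j < m) \<and>
                    (\<forall>i j. j > i \<longrightarrow> \<not> B i j) \<and>
                    (\<forall>i < m. B i i) \<and>
                    (\<forall>i. e i \<longrightarrow> i < m)}"

definition LTA_sub :: "nat \<Rightarrow> mono \<Rightarrow> lta set" where
  "LTA_sub m g = {(B, e) \<in> LTA m. (\<forall>i. i \<notin> g \<longrightarrow> \<not> e i) \<and>
       (\<forall>i j. j < i \<longrightarrow> (i \<notin> g \<or> j \<in> g) \<longrightarrow> \<not> B i j)}"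

text \<open>The image of x_i under (B, eps): x_i + sum_{j<i} b_{i,j} x_j + eps_i.\<close>
definition lin :: "lta \<Rightarrow> nat \<Rightarrow> rpoly" where
  "lin A i = {{i}} \<union> {{j} | j. j < i \<and> fst A i j} \<union> (if snd A i then {{}} else {})"

definition act :: "lta \<Rightarrow> mono \<Rightarrow> rpoly" where
  "act A u = foldr (\<lambda>i p. pmul (lin A i) p) (sorted_list_of_set u) pone"

definition orbit :: "lta set \<Rightarrow> mono \<Rightarrow> rpoly set" where
  "orbit G u = (\<lambda>A. act A u) ` G"

definition set_add :: "rpoly set \<Rightarrow> rpoly set \<Rightarrow> rpoly set" where
  "set_add S T = {padd s t | s t. s \<in> S \<and> t \<in> T}"

definition set_mul :: "rpoly set \<Rightarrow> rpoly set \<Rightarrow> rpoly set" where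
  "set_mul S T = {pmul s t | s t. s \<in> S \<and> t \<in> T}"

end

theory Submission
  imports Defs
begin

(* Evaluated at the 0/1-points of F_2^m, the polynomial (B, eps) . u is the indicator function of
   the affine subspace cut out by the triangular equations x_i = l_i(x_0, ..., x_{i-1}) + eps_i + 1,
   i in ind(u), and a multilinear polynomial is determined by its values.  Back-substitution
   rewrites the equations with pivots in a set W so that their right-hand sides only involve
   variables outside W, which is the shape allowed in LTA(m,2)_W.  As h divides f and g, doing this
   for the h-equations alone, and for the f- (resp. g-) equations while keeping the h-equations,
   replaces the three group elements by elements of LTA_h, LTA_f and LTA_g without changing the
   values of h (f/h + g/h), hence without changing the polynomial. *)

text \<open>The value of p at the 0/1-point of F_2^m with support x.\<close>

definition peval :: "rpoly \<Rightarrow> nat set \<Rightarrow> bool" where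
  "peval p x \<longleftrightarrow> odd (card {a \<in> p. a \<subseteq> x})"

lemma odd_card_symdiff:
  assumes "finite P" "finite Q"
  shows "odd (card ((P - Q) \<union> (Q - P))) \<longleftrightarrow> odd (card P) \<noteq> odd (card Q)"
proof -
  have "card P = card (P \<inter> Q) + card (P - Q)" "card Q = card (P \<inter> Q) + card (Q - P)"
    using card_Int_Diff[OF assms(1), of Q] card_Int_Diff[OF assms(2), of P] by (simp_all add: Int_commute)
  moreover have "card ((P - Q) \<union> (Q - P)) = card (P - Q) + card (Q - P)"
    using assms by (intro card_Un_disjoint) auto
  ultimately show ?thesis by presburger
qed

lemma finite_padd: "finite p \<Longrightarrow> finite q \<Longrightarrow> finite (padd p q)"
  unfolding padd_def by simp

lemma peval_padd:
  assumes "finite p" "finite q"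
  shows "peval (padd p q) x \<longleftrightarrow> peval p x \<noteq> peval q x"
proof -
  have "{a \<in> padd p q. a \<subseteq> x} =
      ({a \<in> p. a \<subseteq> x} - {a \<in> q. a \<subseteq> x}) \<union> ({a \<in> q. a \<subseteq> x} - {a \<in> p. a \<subseteq> x})"
    unfolding padd_def by auto
  then show ?thesis
    unfolding peval_def using assms by (simp add: odd_card_symdiff)
qed

lemma pmul_subset_image: "pmul p q \<subseteq> (\<lambda>(a, b). a \<union> b) ` (p \<times> q)"
proof
  fix w assume "w \<in> pmul p q"
  then have "odd (card {(a, b). a \<in> p \<and> b \<in> q \<and> a \<union> b = w})"
    unfolding pmul_def by simp
  then have "{(a, b). a \<in> p \<and> b \<in> q \<and> a \<union> b = w} \<noteq> {}"
    by (rule odd_card_imp_not_empty)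
  then show "w \<in> (\<lambda>(a, b). a \<union> b) ` (p \<times> q)" by force
qed

lemma finite_pmul: "finite p \<Longrightarrow> finite q \<Longrightarrow> finite (pmul p q)"
  by (rule finite_subset[OF pmul_subset_image]) simp

lemma pmul_subset_Pow: "p \<subseteq> Pow U \<Longrightarrow> q \<subseteq> Pow U \<Longrightarrow> pmul p q \<subseteq> Pow U"
  using pmul_subset_image[of p q] by blast

lemma padd_subset_Pow: "p \<subseteq> Pow U \<Longrightarrow> q \<subseteq> Pow U \<Longrightarrow> padd p q \<subseteq> Pow U"
  unfolding padd_def by blast

lemma peval_pmul:
  assumes "finite p" "finite q"
  shows "peval (pmul p q) x \<longleftrightarrow> peval p x \<and> peval q x"
proof -
  define P where "P = {a \<in> p. a \<subseteq> x}"
  define Q where "Q = {b \<in> q. b \<subseteq> x}"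
  define u where "u = (\<lambda>(a :: nat set, b). a \<union> b)"
  define k where "k = (\<lambda>w. card {z \<in> P \<times> Q. u z = w})"
  have fin: "finite (P \<times> Q)" using assms unfolding P_def Q_def by simp
  have fibre: "{(a, b). a \<in> p \<and> b \<in> q \<and> a \<union> b = w} = {z \<in> P \<times> Q. u z = w}" if "w \<subseteq> x" for w
    using that unfolding P_def Q_def u_def by auto
  have "{w \<in> pmul p q. w \<subseteq> x} = {w \<in> u ` (P \<times> Q). odd (k w)}"
  proof (intro set_eqI iffI)
    fix w assume "w \<in> {w \<in> pmul p q. w \<subseteq> x}"
    then have "odd (k w)" using fibre unfolding pmul_def k_def by auto
    moreover from this have "{z \<in> P \<times> Q. u z = w} \<noteq> {}"
      unfolding k_def using odd_card_imp_not_empty by blast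
    ultimately show "w \<in> {w \<in> u ` (P \<times> Q). odd (k w)}" by blast
  next
    fix w assume "w \<in> {w \<in> u ` (P \<times> Q). odd (k w)}"
    moreover then have "w \<subseteq> x" unfolding P_def Q_def u_def by auto
    ultimately show "w \<in> {w \<in> pmul p q. w \<subseteq> x}" using fibre unfolding pmul_def k_def by auto
  qed
  moreover have "card (P \<times> Q) = (\<Sum>w \<in> u ` (P \<times> Q). k w)"
    unfolding k_def card_eq_sum by (rule sum.image_gen[OF fin])
  ultimately have "peval (pmul p q) x \<longleftrightarrow> odd (card (P \<times> Q))"
    unfolding peval_def by (simp add: even_sum_iff fin)
  then show ?thesis
    unfolding peval_def P_def Q_def by (simp add: card_cartesian_product)
qed

lemma peval_eqI:
  assumes "p \<subseteq> Pow {..<m}" "q \<subseteq> Pow {..<m}" "\<And>x. x \<subseteq> {..<m} \<Longrightarrow> peval p x = peval q x"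
  shows "p = q"
proof (rule ccontr)
  assume "p \<noteq> q"
  have fin: "finite p" "finite q" using assms(1,2) finite_subset by blast+
  have d: "padd p q \<subseteq> Pow {..<m}" "padd p q \<noteq> {}"
    using assms(1,2) \<open>p \<noteq> q\<close> unfolding padd_def by auto
  then obtain a where a: "a \<in> padd p q" "\<And>b. b \<in> padd p q \<Longrightarrow> b \<subseteq> a \<Longrightarrow> b = a"
    using finite_has_minimal[of "padd p q"] finite_subset by (metis finite_Pow_iff finite_lessThan)
  then have "{b \<in> padd p q. b \<subseteq> a} = {a}" by auto
  then have "peval (padd p q) a" unfolding peval_def by simp
  moreover have "a \<subseteq> {..<m}" using a d by auto
  ultimately show False using assms(3) peval_padd[OF fin] by auto
qed

text \<open>A pair (S, c) stands for the affine form \<open>\<Sum>j\<in>S. x\<^sub>j + c\<close> over F_2.\<close>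

definition affine_val :: "nat set \<times> bool \<Rightarrow> nat set \<Rightarrow> bool" where
  "affine_val F x \<longleftrightarrow> odd (card (fst F \<inter> x)) \<noteq> snd F"

text \<open>The linear factor lin A i takes the value 1 exactly where x_i equals this affine form,
  whence the negated constant.\<close>

definition lta_row :: "lta \<Rightarrow> nat \<Rightarrow> nat set \<times> bool" where
  "lta_row A i = ({j. j < i \<and> fst A i j}, \<not> snd A i)"

definition solves :: "(nat \<Rightarrow> nat set \<times> bool) \<Rightarrow> nat set \<Rightarrow> nat set \<Rightarrow> bool" where
  "solves R V x \<longleftrightarrow> (\<forall>i\<in>V. (i \<in> x) = affine_val (R i) x)"

definition triangular :: "(nat \<Rightarrow> nat set \<times> bool) \<Rightarrow> nat set \<Rightarrow> bool" where
  "triangular R V \<longleftrightarrow> (\<forall>i\<in>V. fst (R i) \<subseteq> {..<i})"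

lemma finite_lin: "finite (lin A i)"
proof -
  have "{{j} | j. j < i \<and> fst A i j} \<subseteq> (\<lambda>j. {j}) ` {..<i}" by auto
  then show ?thesis unfolding lin_def by (simp add: finite_subset)
qed

lemma peval_lin: "peval (lin A i) x \<longleftrightarrow> (i \<in> x) = affine_val (lta_row A i) x"
proof -
  define J where "J = {j. j < i \<and> fst A i j \<and> j \<in> x}"
  define S1 where "S1 = (if i \<in> x then {{i}} else {})"
  define S3 where "S3 = (if snd A i then {{}} else ({} :: nat set set))"
  have "{a \<in> lin A i. a \<subseteq> x} = S1 \<union> (\<lambda>j. {j}) ` J \<union> S3"
    unfolding lin_def S1_def S3_def J_def by auto
  moreover have "card (S1 \<union> (\<lambda>j. {j}) ` J \<union> S3) = card S1 + card J + card S3"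
    unfolding S1_def S3_def J_def by (auto simp: card_insert_if card_image inj_on_def)
  moreover have "fst (lta_row A i) \<inter> x = J"
    unfolding lta_row_def J_def by auto
  ultimately show ?thesis
    unfolding peval_def affine_val_def S1_def S3_def by (simp add: lta_row_def)
qed

lemma foldr_pmul_lin:
  "finite (foldr (\<lambda>i. pmul (lin A i)) xs pone) \<and>
   peval (foldr (\<lambda>i. pmul (lin A i)) xs pone) x = solves (lta_row A) (set xs) x"
proof (induction xs)
  case Nil
  have "{a \<in> pone. a \<subseteq> x} = {{}}" unfolding pone_def by auto
  then show ?case by (simp add: pone_def peval_def solves_def)
next
  case (Cons i xs)
  then show ?case by (simp add: finite_pmul peval_pmul finite_lin peval_lin solves_def)
qed

lemma finite_act: "finite (act A u)"
  unfolding act_def using foldr_pmul_lin by blast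

lemma peval_act: "finite u \<Longrightarrow> peval (act A u) x = solves (lta_row A) u x"
  unfolding act_def using foldr_pmul_lin by simp

lemma act_subset_Pow:
  assumes "u \<subseteq> {..<m}"
  shows "act A u \<subseteq> Pow {..<m}"
proof -
  have "set xs \<subseteq> {..<m} \<Longrightarrow> foldr (\<lambda>i. pmul (lin A i)) xs pone \<subseteq> Pow {..<m}" for xs
  proof (induction xs)
    case Nil
    then show ?case by (simp add: pone_def)
  next
    case (Cons i xs)
    then have "lin A i \<subseteq> Pow {..<m}" unfolding lin_def by auto
    with Cons show ?case by (simp add: pmul_subset_Pow)
  qed
  moreover have "finite u" using assms finite_subset by blast
  ultimately show ?thesis unfolding act_def using assms by simp
qed

lemma affine_val_insert:
  assumes "finite S" "n \<notin> S"
  shows "affine_val (insert n S, c) x \<longleftrightarrow> affine_val (S, c) x \<noteq> (n \<in> x)"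
  using assms by (cases "n \<in> x") (simp_all add: affine_val_def Int_insert_left)

lemma affine_val_symdiff:
  assumes "finite S" "finite T"
  shows "affine_val ((S - T) \<union> (T - S), c \<noteq> d) x \<longleftrightarrow> affine_val (S, c) x \<noteq> affine_val (T, d) x"
proof -
  have "((S - T) \<union> (T - S)) \<inter> x = ((S \<inter> x) - (T \<inter> x)) \<union> ((T \<inter> x) - (S \<inter> x))" by auto
  then show ?thesis
    unfolding affine_val_def using assms by (auto simp: odd_card_symdiff)
qed

lemma affine_val_substitute:
  assumes "finite S" "finite S'" "finite T" "n \<in> S"
    and "affine_val (S - {n}, c) x = affine_val (S', c') x" "(n \<in> x) = affine_val (T, d) x"
  shows "affine_val (S, c) x = affine_val ((S' - T) \<union> (T - S'), c' \<noteq> d) x"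
proof -
  have "affine_val (S, c) x \<longleftrightarrow> affine_val (S - {n}, c) x \<noteq> (n \<in> x)"
    using affine_val_insert[of "S - {n}" n c x] assms(1,4) by (simp add: insert_absorb)
  also have "\<dots> \<longleftrightarrow> affine_val (S', c') x \<noteq> affine_val (T, d) x"
    using assms(5,6) by simp
  also have "\<dots> \<longleftrightarrow> affine_val ((S' - T) \<union> (T - S'), c' \<noteq> d) x"
    using affine_val_symdiff[OF assms(2,3)] by simp
  finally show ?thesis .
qed

lemma solves_mono: "U \<subseteq> V \<Longrightarrow> solves R V x \<Longrightarrow> solves R U x"
  unfolding solves_def by blast

text \<open>Back-substitution: every x_k with k in V is replaced by the right-hand side of its
  equation, which only involves smaller indices.\<close>

lemma eliminate_pivots:
  assumes "triangular R V" "S \<subseteq> {..<n}"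
  shows "\<exists>S' c'. S' \<subseteq> {..<n} - V \<and>
    (\<forall>x. solves R (V \<inter> {..<n}) x \<longrightarrow> affine_val (S, c) x = affine_val (S', c') x)"
  using assms(2)
proof (induction n arbitrary: S c)
  case 0
  then show ?case by auto
next
  case (Suc n)
  have below: "solves R (V \<inter> {..<n}) x" if "solves R (V \<inter> {..<Suc n}) x" for x
    by (rule solves_mono[OF _ that]) auto
  have "S - {n} \<subseteq> {..<n}" using Suc.prems by auto
  then obtain S0 c0 where S0: "S0 \<subseteq> {..<n} - V"
    and eq0: "\<And>x. solves R (V \<inter> {..<n}) x \<Longrightarrow> affine_val (S - {n}, c) x = affine_val (S0, c0) x"
    using Suc.IH[OF \<open>S - {n} \<subseteq> {..<n}\<close>, of c] by (elim exE conjE) auto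
  obtain T d where T: "T \<subseteq> {..<Suc n} - V"
    and eqT: "\<And>x. solves R (V \<inter> {..<Suc n}) x \<Longrightarrow> (n \<in> x) = affine_val (T, d) x"
  proof (cases "n \<in> V")
    case True
    then have R_n: "fst (R n) \<subseteq> {..<n}" using assms(1) unfolding triangular_def by blast
    obtain T d where "T \<subseteq> {..<n} - V"
      and "\<And>x. solves R (V \<inter> {..<n}) x \<Longrightarrow> affine_val (R n) x = affine_val (T, d) x"
      using Suc.IH[OF R_n, of "snd (R n)", unfolded prod.collapse] by (elim exE conjE) auto
    moreover have "(n \<in> x) = affine_val (R n) x" if "solves R (V \<inter> {..<Suc n}) x" for x
      using that True unfolding solves_def by simp
    ultimately show ?thesis using that[of T d] below by fastforce
  next
    case False
    show ?thesis by (rule that[of "{n}" False]) (use False in \<open>auto simp: affine_val_def Int_insert_left\<close>)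
  qed
  have fin: "finite S" "finite S0" "finite T"
    using Suc.prems S0 T finite_subset[OF _ finite_lessThan] by blast+
  show ?case
  proof (cases "n \<in> S")
    case False
    have "S0 \<subseteq> {..<Suc n} - V" using S0 by auto
    with False eq0 below show ?thesis by (metis Diff_empty Diff_insert0)
  next
    case True
    have "affine_val (S, c) x = affine_val ((S0 - T) \<union> (T - S0), c0 \<noteq> d) x"
      if "solves R (V \<inter> {..<Suc n}) x" for x
      using affine_val_substitute[OF fin True eq0[OF below[OF that]] eqT[OF that]] .
    moreover have "(S0 - T) \<union> (T - S0) \<subseteq> {..<Suc n} - V" using S0 T by auto
    ultimately show ?thesis by blast
  qed
qed

lemma solves_cong:
  assumes "\<And>i x. i \<in> V \<Longrightarrow> solves R (V \<inter> {..<i}) x \<Longrightarrow> affine_val (R i) x = affine_val (R' i) x"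
  shows "solves R V x \<longleftrightarrow> solves R' V x"
proof
  assume R: "solves R V x"
  show "solves R' V x" unfolding solves_def
  proof
    fix i assume "i \<in> V"
    with R assms[OF this solves_mono[OF Int_lower1 R]] show "(i \<in> x) = affine_val (R' i) x"
      unfolding solves_def by simp
  qed
next
  assume R': "solves R' V x"
  have "i \<in> V \<longrightarrow> (i \<in> x) = affine_val (R i) x" for i
  proof (induction i rule: less_induct)
    case (less i)
    show ?case
    proof
      assume "i \<in> V"
      have "solves R (V \<inter> {..<i}) x" using less.IH unfolding solves_def by simp
      with R' assms[OF \<open>i \<in> V\<close>] \<open>i \<in> V\<close> show "(i \<in> x) = affine_val (R i) x"
        unfolding solves_def by simp
    qed
  qed
  then show "solves R V x" unfolding solves_def by blast
qed

lemma triangular_normal_form: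
  assumes "triangular R V"
  obtains N where "\<And>i. i \<in> V \<Longrightarrow> fst (N i) \<subseteq> {..<i} - V"
    and "\<And>i x. i \<in> V \<Longrightarrow> solves R (V \<inter> {..<i}) x \<Longrightarrow> affine_val (R i) x = affine_val (N i) x"
proof -
  have "\<forall>i\<in>V. \<exists>F. fst F \<subseteq> {..<i} - V \<and>
      (\<forall>x. solves R (V \<inter> {..<i}) x \<longrightarrow> affine_val (R i) x = affine_val F x)"
  proof
    fix i assume "i \<in> V"
    then have "fst (R i) \<subseteq> {..<i}" using assms unfolding triangular_def by blast
    from eliminate_pivots[OF assms this, of "snd (R i)"] show "\<exists>F. fst F \<subseteq> {..<i} - V \<and>
      (\<forall>x. solves R (V \<inter> {..<i}) x \<longrightarrow> affine_val (R i) x = affine_val F x)"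
      by (metis fst_conv prod.collapse snd_conv)
  qed
  then have "\<exists>N. \<forall>i\<in>V. fst (N i) \<subseteq> {..<i} - V \<and>
      (\<forall>x. solves R (V \<inter> {..<i}) x \<longrightarrow> affine_val (R i) x = affine_val (N i) x)"
    by (rule bchoice)
  then show ?thesis using that by blast
qed

definition lta_of_rows :: "nat \<Rightarrow> nat set \<Rightarrow> (nat \<Rightarrow> nat set \<times> bool) \<Rightarrow> lta" where
  "lta_of_rows m V N =
     (\<lambda>i j. (i < m \<and> j = i) \<or> (i \<in> V \<and> j < i \<and> j \<in> fst (N i)), \<lambda>i. i \<in> V \<and> \<not> snd (N i))"

lemma lta_row_lta_of_rows:
  "i \<in> V \<Longrightarrow> fst (N i) \<subseteq> {..<i} \<Longrightarrow> lta_row (lta_of_rows m V N) i = N i"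
  unfolding lta_row_def lta_of_rows_def by (cases "N i") auto

lemma lta_of_rows_in_LTA_sub:
  assumes "V \<subseteq> W" "W \<subseteq> {..<m}" "\<And>i. i \<in> V \<Longrightarrow> fst (N i) \<subseteq> {..<i} - W"
  shows "lta_of_rows m V N \<in> LTA_sub m W"
  using assms unfolding lta_of_rows_def LTA_sub_def LTA_def by (auto; blast)

lemma solves_empty [simp]: "solves R {} x"
  unfolding solves_def by simp

lemma solves_if_split:
  "U \<subseteq> W \<Longrightarrow> solves (\<lambda>i. if i \<in> U then R i else R' i) W x \<longleftrightarrow> solves R U x \<and> solves R' (W - U) x"
  unfolding solves_def by auto

lemma LTA_sub_equivalent_system:
  assumes "U \<subseteq> W" "W \<subseteq> {..<m}"
  obtains C where "C \<in> LTA_sub m W"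
    and "\<And>x. solves (lta_row A) U x \<and> solves (lta_row B) (W - U) x \<longleftrightarrow>
              solves (lta_row A) U x \<and> solves (lta_row C) (W - U) x"
proof -
  define R where "R = (\<lambda>i. if i \<in> U then lta_row A i else lta_row B i)"
  have "triangular R W" unfolding R_def triangular_def lta_row_def by auto
  then obtain N where N_sub: "\<And>i. i \<in> W \<Longrightarrow> fst (N i) \<subseteq> {..<i} - W"
    and N_eq: "\<And>i x. i \<in> W \<Longrightarrow> solves R (W \<inter> {..<i}) x \<Longrightarrow> affine_val (R i) x = affine_val (N i) x"
    by (rule triangular_normal_form[of R W]) blast
  define C where "C = lta_of_rows m (W - U) N"
  have C_sub: "C \<in> LTA_sub m W"
    unfolding C_def using assms N_sub by (intro lta_of_rows_in_LTA_sub) auto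
  have row_C: "lta_row C i = N i" if "i \<in> W - U" for i
    unfolding C_def using that N_sub by (intro lta_row_lta_of_rows) auto
  have "solves (lta_row A) U x \<and> solves (lta_row B) (W - U) x \<longleftrightarrow>
      solves (lta_row A) U x \<and> solves (lta_row C) (W - U) x" for x
  proof -
    have "solves R W x \<longleftrightarrow> solves (\<lambda>i. if i \<in> U then R i else N i) W x"
      using N_eq by (intro solves_cong) auto
    moreover have "solves N (W - U) x \<longleftrightarrow> solves (lta_row C) (W - U) x"
      unfolding solves_def using row_C by simp
    ultimately show ?thesis
      using assms(1) unfolding R_def by (simp add: solves_if_split cong: if_cong)
  qed
  with C_sub show ?thesis by (rule that)
qed

lemma peval_act_product:
  assumes "finite h" "finite u" "finite v"
  shows "peval (pmul (act A0 h) (padd (act A1 u) (act A2 v))) x \<longleftrightarrow>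
    solves (lta_row A0) h x \<and> (solves (lta_row A1) u x \<noteq> solves (lta_row A2) v x)"
  using assms by (simp add: peval_pmul peval_padd peval_act finite_act finite_padd)

lemma act_product_subset_Pow:
  "h \<subseteq> {..<m} \<Longrightarrow> u \<subseteq> {..<m} \<Longrightarrow> v \<subseteq> {..<m} \<Longrightarrow>
    pmul (act A0 h) (padd (act A1 u) (act A2 v)) \<subseteq> Pow {..<m}"
  by (intro pmul_subset_Pow padd_subset_Pow act_subset_Pow)

lemma act_product_in_LTA_sub_orbits:
  assumes f: "f \<subseteq> {..<m}" and g: "g \<subseteq> {..<m}" and h: "h = f \<inter> g"
  shows "pmul (act A0 h) (padd (act A1 (f - h)) (act A2 (g - h))) \<in>
    set_mul (orbit (LTA_sub m h) h) (set_add (orbit (LTA_sub m f) (f - h)) (orbit (LTA_sub m g) (g - h)))"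
proof -
  have "h \<subseteq> {..<m}" "h \<subseteq> f" "h \<subseteq> g" using f h by auto
  obtain C0 where C0: "C0 \<in> LTA_sub m h"
    and E0: "\<And>x. solves (lta_row A0) h x \<longleftrightarrow> solves (lta_row C0) h x"
    using LTA_sub_equivalent_system[OF empty_subsetI \<open>h \<subseteq> {..<m}\<close>, of A0 A0] by simp blast
  obtain C1 where C1: "C1 \<in> LTA_sub m f"
    and E1: "\<And>x. solves (lta_row A0) h x \<and> solves (lta_row A1) (f - h) x \<longleftrightarrow>
                  solves (lta_row A0) h x \<and> solves (lta_row C1) (f - h) x"
    using LTA_sub_equivalent_system[OF \<open>h \<subseteq> f\<close> f, of A0 A1] by blast
  obtain C2 where C2: "C2 \<in> LTA_sub m g"
    and E2: "\<And>x. solves (lta_row A0) h x \<and> solves (lta_row A2) (g - h) x \<longleftrightarrow>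
                  solves (lta_row A0) h x \<and> solves (lta_row C2) (g - h) x"
    using LTA_sub_equivalent_system[OF \<open>h \<subseteq> g\<close> g, of A0 A2] by blast
  define z where "z = pmul (act A0 h) (padd (act A1 (f - h)) (act A2 (g - h)))"
  define w where "w = pmul (act C0 h) (padd (act C1 (f - h)) (act C2 (g - h)))"
  have fin: "finite h" "finite (f - h)" "finite (g - h)"
    using f g h finite_subset[OF _ finite_lessThan] by blast+
  have "z = w"
  proof (rule peval_eqI)
    have "f - h \<subseteq> {..<m}" "g - h \<subseteq> {..<m}" using f g by auto
    with \<open>h \<subseteq> {..<m}\<close> show "z \<subseteq> Pow {..<m}" "w \<subseteq> Pow {..<m}"
      unfolding z_def w_def by (simp_all add: act_product_subset_Pow)
    show "peval z x = peval w x" for x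
      unfolding z_def w_def peval_act_product[OF fin] using E0[of x] E1[of x] E2[of x] by blast
  qed
  moreover have "w \<in> set_mul (orbit (LTA_sub m h) h)
      (set_add (orbit (LTA_sub m f) (f - h)) (orbit (LTA_sub m g) (g - h)))"
    unfolding w_def set_mul_def set_add_def orbit_def using C0 C1 C2 by blast
  ultimately show ?thesis unfolding z_def by simp
qed

lemma set_mul_orbit_subsetI:
  "(\<And>A0 A1 A2. pmul (act A0 h) (padd (act A1 u) (act A2 v)) \<in> S) \<Longrightarrow>
    set_mul (orbit G h) (set_add (orbit G' u) (orbit G'' v)) \<subseteq> S"
  unfolding set_mul_def set_add_def orbit_def by blast

lemma LTA_sub_subset_LTA: "LTA_sub m u \<subseteq> LTA m"
  unfolding LTA_sub_def by auto

lemma orbit_mono: "G \<subseteq> H \<Longrightarrow> orbit G u \<subseteq> orbit H u"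
  unfolding orbit_def by auto

lemma set_add_mono: "S \<subseteq> S' \<Longrightarrow> T \<subseteq> T' \<Longrightarrow> set_add S T \<subseteq> set_add S' T'"
  unfolding set_add_def by blast

lemma set_mul_mono: "S \<subseteq> S' \<Longrightarrow> T \<subseteq> T' \<Longrightarrow> set_mul S T \<subseteq> set_mul S' T'"
  unfolding set_mul_def by blast

theorem lemma2:
  fixes m :: nat and I :: "mono set" and f g h :: mono and r :: nat
  assumes "m \<ge> 1"
    and "decreasing m I"
    and "r = Max (card ` I)"
    and "f \<in> I" and "card f = r"
    and "g \<in> I" and "card g = r"
    and "h = f \<inter> g"
  shows "set_mul (orbit (LTA m) h)
           (set_add (orbit (LTA m) (f - h)) (orbit (LTA m) (g - h)))
       = set_mul (orbit (LTA_sub m h) h)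
           (set_add (orbit (LTA_sub m f) (f - h)) (orbit (LTA_sub m g) (g - h)))"
proof -
  txt \<open>Only f, g \<subseteq> {..<m} is needed: the identity holds for any two monomials.\<close>
  have "f \<subseteq> {..<m}" "g \<subseteq> {..<m}"
    using assms(2,4,6) unfolding decreasing_def monomials_def by auto
  note subset = set_mul_orbit_subsetI[OF act_product_in_LTA_sub_orbits[OF this assms(8)]]
  show ?thesis
    by (rule equalityI[OF subset]) (intro set_mul_mono set_add_mono orbit_mono LTA_sub_subset_LTA)
qed

end
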